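(* Let $\lambda=(n,n)$ with $n\ge1$. Then $$\xi(q)=\sum_k|S_k(\lambda)|q^k=\sum_{i=1}^{n}B(n-1,n-i)(1+q)^i=\sum_{i=1}^n\frac{i}{n}\binom{2n-i-1}{n-i}(1+q)^i,$$ where $B(\alpha,\beta)=\frac{\alpha-\beta+1}{\alpha+1}\binom{\alpha+\beta}{\alpha}$ is the ballot number.
   Context: The shape $(n,n)$ has two rows of $n$ left-justified boxes. A row-standard filling uses $1,\dots,2n$ once each with rows strictly increasing left to right. Inversion pairs of a row-standard $\tau$: for a box $c$ and $r\ge1$ let $c^{(r)}$ be the box $r$ positions to its right, if it exists. For distinct boxes $c,c'$ in the same column with $\tau(c)<\tau(c')$, let $r\ge1$ be least such that one of $c^{(r)},c'^{(r)}$ does not exist or $\tau(c^{(r)})\ne\tau(c'^{(r)})$; $(c,c')$ is an inversion pair if either (one does not exist and $c$ lies below $c'$) or (both exist and $\tau(c^{(r)})>\tau(c'^{(r)})$). $S_k(\lambda)$: row-standard fillings of shape $\lambda$ with exactly $k$ inversion pairs. *)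

theory Defs
  imports Complex_Main
begin

text \<open>Boxes of the shape (n,n): pairs (row, column), row 1 = top row, row 2 = bottom
  row (English convention), columns 1..n.\<close>
definition boxes :: "nat \<Rightarrow> (nat \<times> nat) set" where
  "boxes n = {1,2} \<times> {1..n}"

definition row_standard :: "nat \<Rightarrow> (nat \<times> nat \<Rightarrow> nat) \<Rightarrow> bool" where
  "row_standard n \<tau> \<longleftrightarrow>
     bij_betw \<tau> (boxes n) {1..2*n} \<and>
     (\<forall>x. x \<notin> boxes n \<longrightarrow> \<tau> x = 0) \<and>
     (\<forall>i j j'. (i, j) \<in> boxes n \<longrightarrow> (i, j') \<in> boxes n \<longrightarrow> j < j' \<longrightarrow> \<tau> (i, j) < \<tau> (i, j'))"

definition shift :: "nat \<times> nat \<Rightarrow> nat \<Rightarrow> nat \<times> nat" where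
  "shift c r = (fst c, snd c + r)"

definition exists_box :: "nat \<Rightarrow> nat \<times> nat \<Rightarrow> nat \<Rightarrow> bool" where
  "exists_box n c r \<longleftrightarrow> shift c r \<in> boxes n"

definition below :: "nat \<times> nat \<Rightarrow> nat \<times> nat \<Rightarrow> bool" where
  "below c c' \<longleftrightarrow> fst c > fst c'"

definition stop_cond :: "nat \<Rightarrow> (nat \<times> nat \<Rightarrow> nat) \<Rightarrow> nat \<times> nat \<Rightarrow> nat \<times> nat \<Rightarrow> nat \<Rightarrow> bool" where
  "stop_cond n \<tau> c c' r \<longleftrightarrow>
     \<not> exists_box n c r \<or> \<not> exists_box n c' r \<or> \<tau> (shift c r) \<noteq> \<tau> (shift c' r)"

definition is_inv_pair :: "nat \<Rightarrow> (nat \<times> nat \<Rightarrow> nat) \<Rightarrow> nat \<times> nat \<Rightarrow> nat \<times> nat \<Rightarrow> bool" where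
  "is_inv_pair n \<tau> c c' \<longleftrightarrow>
     c \<in> boxes n \<and> c' \<in> boxes n \<and> c \<noteq> c' \<and> snd c = snd c' \<and> \<tau> c < \<tau> c' \<and>
     (let r = (LEAST r. r \<ge> 1 \<and> stop_cond n \<tau> c c' r) in
        ((\<not> exists_box n c r \<or> \<not> exists_box n c' r) \<and> below c c') \<or>
        (exists_box n c r \<and> exists_box n c' r \<and> \<tau> (shift c r) > \<tau> (shift c' r)))"

definition inv_count :: "nat \<Rightarrow> (nat \<times> nat \<Rightarrow> nat) \<Rightarrow> nat" where
  "inv_count n \<tau> = card {(c, c'). is_inv_pair n \<tau> c c'}"

definition S :: "nat \<Rightarrow> nat \<Rightarrow> (nat \<times> nat \<Rightarrow> nat) set" where
  "S n k = {\<tau>. row_standard n \<tau> \<and> inv_count n \<tau> = k}"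

definition ballot :: "nat \<Rightarrow> nat \<Rightarrow> real" where
  "ballot a b = ((real a - real b + 1) / (real a + 1)) * real ((a + b) choose a)"

end

theory Submission
  imports Defs
begin

text \<open>
  Reading the entries \<open>1, \<dots>, 2n\<close> of a row-standard filling \<open>\<tau>\<close> in increasing order and
  recording an up step for each top-row entry and a down step for each bottom-row entry is a
  bijection onto the lattice paths with \<open>n\<close> up and \<open>n\<close> down steps.  As \<open>\<tau>\<close> is injective, the
  comparison defining an inversion pair always stops one column to the right, so the number of
  inversion pairs is the number of changes in the sequence of truth values
  \<open>\<tau>(1,j) < \<tau>(2,j)\<close>, \<open>j = 1, \<dots>, n\<close>, plus one if this sequence ends with False.  On the path,
  \<open>\<tau>(1,j) < \<tau>(2,j)\<close> says exactly that the \<open>j\<close>-th down step lies above the axis.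

  Record for every step of a path on which side of the axis it lies.  For balanced paths the side
  changes of all steps are exactly those of the down steps, and the generating functions of the
  paths from the origin to a given end point, by number of side changes and final side, satisfy
  the Pascal recurrence of the ballot numbers.  This yields
  \<open>(1 + q) \<Sum>\<^sub>i B(n-1, n-i) (1+q)\<^bsup>i-1\<^esup>\<close>.
\<close>

section \<open>Ballot numbers\<close>

lemma ballot_right_0 [simp]: "ballot a 0 = 1"
  by (simp add: ballot_def field_simps)

lemma ballot_pred_self: "b \<ge> 1 \<Longrightarrow> ballot (b - 1) b = 0"
  by (simp add: ballot_def)

lemma ballot_pascal:
  assumes "1 \<le> b" "b \<le> a"
  shows "ballot a b = ballot (a - 1) b + ballot a (b - 1)"
proof -
  define C where "C = real ((a + b) choose a)"
  have "a * ((a + b) choose a) = (a + b) * ((a + b - 1) choose (a - 1))"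
    using times_binomial_minus1_eq[of a "a + b"] assms by simp
  then have left: "real ((a + b - 1) choose (a - 1)) = a * C / (a + b)"
    unfolding C_def using assms by (simp add: field_simps flip: of_nat_mult)
  have "b * ((a + b) choose b) = (a + b) * ((a + b - 1) choose (b - 1))"
    using times_binomial_minus1_eq[of b "a + b"] assms by simp
  moreover have "(a + b) choose b = (a + b) choose a" "(a + b - 1) choose (b - 1) = (a + b - 1) choose a"
    using binomial_symmetric[of a "a + b"] binomial_symmetric[of a "a + b - 1"] assms by simp_all
  ultimately have right: "real ((a + b - 1) choose a) = b * C / (a + b)"
    unfolding C_def using assms by (simp add: field_simps flip: of_nat_mult)
  have sums: "a - 1 + b = a + b - 1" "a + (b - 1) = a + b - 1"
    using assms by auto
  show ?thesis
    unfolding ballot_def sums left right C_def[symmetric] using assms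
    by (simp add: divide_simps) (simp add: algebra_simps)
qed

lemma ballot_eq_binomial:
  assumes "1 \<le> i" "i \<le> n"
  shows "ballot (n - 1) (n - i) = real i / real n * real ((2 * n - i - 1) choose (n - i))"
proof -
  have "(2 * n - i - 1) choose (n - 1) = (2 * n - i - 1) choose (n - i)"
    using binomial_symmetric[of "n - 1" "2 * n - i - 1"] assms by (simp add: diff_diff_add)
  moreover have "n - 1 + (n - i) = 2 * n - i - 1"
    using assms by simp
  ultimately show ?thesis
    using assms by (simp add: ballot_def)
qed

definition ballot_poly :: "real \<Rightarrow> nat \<Rightarrow> nat \<Rightarrow> real" where
  "ballot_poly x a b = (\<Sum>i=0..b. ballot (a - 1) (b - i) * x ^ i)"

lemma ballot_poly_0 [simp]: "ballot_poly x a 0 = 1"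
  by (simp add: ballot_poly_def)

lemma ballot_poly_pascal:
  assumes "1 \<le> b" "b < a"
  shows "ballot_poly x a b = ballot_poly x (a - 1) b + ballot_poly x a (b - 1)"
proof -
  obtain b' where b: "b = Suc b'"
    using assms by (cases b) auto
  have pascal: "ballot (a - 1) (b - i) = ballot (a - 1 - 1) (b - i) + ballot (a - 1) (b' - i)"
    if "i \<le> b'" for i
    using ballot_pascal[of "b - i" "a - 1"] that assms b by (simp add: Suc_diff_le)
  have "ballot_poly x a b = (\<Sum>i=0..b'. ballot (a - 1) (b - i) * x ^ i) + x ^ b"
    unfolding ballot_poly_def b by simp
  also have "\<dots> = (\<Sum>i=0..b'. ballot (a - 1 - 1) (b - i) * x ^ i + ballot (a - 1) (b' - i) * x ^ i) + x ^ b"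
    by (intro arg_cong2[where f = "(+)"] sum.cong refl) (use pascal in \<open>simp add: distrib_right\<close>)
  also have "\<dots> = (\<Sum>i=0..b'. ballot (a - 1 - 1) (b - i) * x ^ i) + x ^ b
                 + (\<Sum>i=0..b'. ballot (a - 1) (b' - i) * x ^ i)"
    by (simp add: sum.distrib)
  also have "\<dots> = ballot_poly x (a - 1) b + ballot_poly x a (b - 1)"
    unfolding ballot_poly_def b by (simp add: diff_diff_add)
  finally show ?thesis .
qed

lemma ballot_poly_diag:
  assumes "b \<ge> 1"
  shows "ballot_poly x b b = x * ballot_poly x b (b - 1)"
proof -
  obtain b' where b: "b = Suc b'"
    using assms by (cases b) auto
  have "x * ballot_poly x b (b - 1) = (\<Sum>i=0..b'. ballot b' (b - Suc i) * x ^ Suc i)"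
    unfolding ballot_poly_def b by (simp add: sum_distrib_left algebra_simps)
  also have "\<dots> = (\<Sum>i=Suc 0..Suc b'. ballot b' (b - i) * x ^ i)"
    by (rule sum.shift_bounds_cl_Suc_ivl[symmetric])
  also have "\<dots> = ballot_poly x b b"
    unfolding ballot_poly_def sum.atLeast_Suc_atMost[OF le0, of _ b]
    using ballot_pred_self[OF assms] b by simp
  finally show ?thesis ..
qed

section \<open>Lattice paths and the sides of their steps\<close>

definition paths :: "nat \<Rightarrow> nat \<Rightarrow> bool list set" where
  "paths a b = {w. count_list w True = a \<and> count_list w False = b}"

lemma length_eq_count_list_bool: "length w = count_list w True + count_list w False"
  by (induction w) auto

lemma finite_paths: "finite (paths a b)"
proof (rule finite_subset)
  show "paths a b \<subseteq> {w. set w \<subseteq> UNIV \<and> length w = a + b}"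
    unfolding paths_def using length_eq_count_list_bool by auto
qed (rule finite_lists_length_eq, simp)

lemma paths_not_Nil: "w \<in> paths a b \<Longrightarrow> a + b \<ge> 1 \<Longrightarrow> w \<noteq> []"
  by (auto simp: paths_def)

lemma paths_0_0: "paths 0 0 = {[]}"
proof -
  have "w = []" if "count_list w True = 0" "count_list w False = 0" for w
    using that length_eq_count_list_bool[of w] by simp
  then show ?thesis
    by (auto simp: paths_def)
qed

lemma sum_paths_snoc:
  assumes "a + b \<ge> 1"
  shows "sum f (paths a b) =
           (if a \<ge> 1 then \<Sum>v\<in>paths (a - 1) b. f (v @ [True]) else 0)
         + (if b \<ge> 1 then \<Sum>v\<in>paths a (b - 1). f (v @ [False]) else 0)"
proof -
  define U where "U = (if a \<ge> 1 then paths (a - 1) b else {})"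
  define D where "D = (if b \<ge> 1 then paths a (b - 1) else {})"
  have split: "paths a b = (\<lambda>v. v @ [True]) ` U \<union> (\<lambda>v. v @ [False]) ` D"
  proof (intro equalityI subsetI)
    fix w assume w: "w \<in> paths a b"
    then have "w \<noteq> []"
      using assms by (rule paths_not_Nil)
    then obtain v c where "w = v @ [c]"
      using rev_exhaust by blast
    then show "w \<in> (\<lambda>v. v @ [True]) ` U \<union> (\<lambda>v. v @ [False]) ` D"
      using w by (cases c) (auto simp: U_def D_def paths_def)
  qed (auto simp: U_def D_def paths_def split: if_splits)
  have inj: "inj_on (\<lambda>v. v @ [c]) X" for c :: bool and X
    by (rule inj_onI) simp
  have "sum f (paths a b) = sum f ((\<lambda>v. v @ [True]) ` U) + sum f ((\<lambda>v. v @ [False]) ` D)"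
    unfolding split by (rule sum.union_disjoint) (auto simp: U_def D_def finite_paths)
  also have "\<dots> = (\<Sum>v\<in>U. f (v @ [True])) + (\<Sum>v\<in>D. f (v @ [False]))"
    by (simp add: sum.reindex[OF inj])
  finally show ?thesis
    by (simp add: U_def D_def)
qed

definition height :: "bool list \<Rightarrow> int" where
  "height w = int (count_list w True) - int (count_list w False)"

lemma height_Nil [simp]: "height [] = 0"
  by (simp add: height_def)

lemma height_snoc [simp]: "height (w @ [c]) = height w + (if c then 1 else - 1)"
  by (simp add: height_def)

lemma height_path: "w \<in> paths a b \<Longrightarrow> height w = int a - int b"
  by (simp add: height_def paths_def)

text \<open>The step leaving height \<open>h\<close>, upwards iff \<open>up\<close>, lies in the upper half-plane.\<close>

definition step_above :: "bool \<Rightarrow> int \<Rightarrow> bool" where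
  "step_above up h \<longleftrightarrow> (if up then 0 \<le> h else 1 \<le> h)"

definition sides :: "bool list \<Rightarrow> bool list" where
  "sides w = map (\<lambda>p. step_above (w ! p) (height (take p w))) [0..<length w]"

definition down_sides :: "bool list \<Rightarrow> bool list" where
  "down_sides w = map (\<lambda>p. step_above False (height (take p w))) (filter (\<lambda>p. \<not> w ! p) [0..<length w])"

lemma sides_Nil [simp]: "sides [] = []"
  by (simp add: sides_def)

lemma sides_eq_Nil_iff [simp]: "sides w = [] \<longleftrightarrow> w = []"
  by (simp add: sides_def)

lemma sides_snoc [simp]: "sides (w @ [c]) = sides w @ [step_above c (height w)]"
  unfolding sides_def by (auto simp: nth_append intro!: map_cong)

lemma down_sides_Nil [simp]: "down_sides [] = []"
  by (simp add: down_sides_def)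

lemma down_sides_snoc [simp]:
  "down_sides (w @ [c]) = down_sides w @ (if c then [] else [step_above False (height w)])"
proof -
  have "filter (\<lambda>p. \<not> (w @ [c]) ! p) [0..<length w] = filter (\<lambda>p. \<not> w ! p) [0..<length w]"
    by (rule filter_cong) (auto simp: nth_append)
  then show ?thesis
    unfolding down_sides_def by (auto intro!: map_cong)
qed

fun changes :: "'a list \<Rightarrow> nat" where
  "changes (x # y # zs) = (if x = y then 0 else 1) + changes (y # zs)"
| "changes _ = 0"

lemma changes_snoc: "changes (xs @ [y]) = changes xs + (if xs \<noteq> [] \<and> last xs \<noteq> y then 1 else 0)"
  by (induction xs rule: changes.induct) auto

definition side_weight :: "real \<Rightarrow> bool \<Rightarrow> bool list \<Rightarrow> real" where
  "side_weight q l w = (if w \<noteq> [] \<and> last (sides w) = l then q ^ changes (sides w) else 0)"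

definition side_gf :: "real \<Rightarrow> nat \<Rightarrow> nat \<Rightarrow> bool \<Rightarrow> real" where
  "side_gf q a b l = (\<Sum>w\<in>paths a b. side_weight q l w)"

lemma side_weight_single: "side_weight q l [c] = (if c = l then 1 else 0)"
  by (simp add: side_weight_def sides_def step_above_def)

lemma side_weight_snoc:
  assumes "v \<noteq> []"
  shows "side_weight q l (v @ [c]) =
           (if step_above c (height v) = l then side_weight q l v + q * side_weight q (\<not> l) v else 0)"
  using assms by (cases "last (sides v) = l") (auto simp: side_weight_def changes_snoc)

lemma sum_side_weight_snoc:
  assumes "a + b \<ge> 1"
  shows "(\<Sum>v\<in>paths a b. side_weight q l (v @ [c])) =
           (if step_above c (int a - int b) = l then side_gf q a b l + q * side_gf q a b (\<not> l) else 0)"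
proof -
  have "side_weight q l (v @ [c]) =
          (if step_above c (int a - int b) = l then side_weight q l v + q * side_weight q (\<not> l) v else 0)"
    if "v \<in> paths a b" for v
    using that side_weight_snoc[of v q l c] paths_not_Nil[OF that assms] by (simp add: height_path)
  then show ?thesis
    unfolding side_gf_def by (simp add: sum.distrib sum_distrib_left cong: sum.cong)
qed

lemma side_gf_rec:
  assumes "a + b \<ge> 2"
  shows "side_gf q a b l =
           (if a \<ge> 1 \<and> (b \<le> a - 1) = l then side_gf q (a - 1) b l + q * side_gf q (a - 1) b (\<not> l) else 0)
         + (if b \<ge> 1 \<and> (b \<le> a) = l then side_gf q a (b - 1) l + q * side_gf q a (b - 1) (\<not> l) else 0)"
proof -
  have up: "(\<Sum>v\<in>paths (a - 1) b. side_weight q l (v @ [True])) =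
              (if (b \<le> a - 1) = l then side_gf q (a - 1) b l + q * side_gf q (a - 1) b (\<not> l) else 0)"
    if "a \<ge> 1"
    using sum_side_weight_snoc[of "a - 1" b q l True] that assms by (cases a) (auto simp: step_above_def)
  have down: "(\<Sum>v\<in>paths a (b - 1). side_weight q l (v @ [False])) =
              (if (b \<le> a) = l then side_gf q a (b - 1) l + q * side_gf q a (b - 1) (\<not> l) else 0)"
    if "b \<ge> 1"
    using sum_side_weight_snoc[of a "b - 1" q l False] that assms by (cases b) (auto simp: step_above_def)
  have "side_gf q a b l =
          (if a \<ge> 1 then \<Sum>v\<in>paths (a - 1) b. side_weight q l (v @ [True]) else 0)
        + (if b \<ge> 1 then \<Sum>v\<in>paths a (b - 1). side_weight q l (v @ [False]) else 0)"
    unfolding side_gf_def using assms by (intro sum_paths_snoc) simp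
  then show ?thesis
    using up down by (cases "a \<ge> 1"; cases "b \<ge> 1") simp_all
qed

text \<open>A path ending at height \<open>a - b \<noteq> 0\<close> ends with a step on the side of its end point, so
  only one final side contributes.\<close>

definition side_gf_value :: "real \<Rightarrow> nat \<Rightarrow> nat \<Rightarrow> bool \<Rightarrow> real" where
  "side_gf_value q a b l =
     (if b < a then (if l then ballot_poly (1 + q) a b else 0)
      else if a < b then (if l then 0 else ballot_poly (1 + q) b a)
      else ballot_poly (1 + q) a (a - 1))"

lemma side_gf_base:
  assumes "a + b = 1"
  shows "side_gf q a b l = side_gf_value q a b l"
proof -
  have "side_gf q a b l =
          (if a \<ge> 1 then \<Sum>v\<in>paths (a - 1) b. side_weight q l (v @ [True]) else 0)
        + (if b \<ge> 1 then \<Sum>v\<in>paths a (b - 1). side_weight q l (v @ [False]) else 0)"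
    unfolding side_gf_def using assms by (intro sum_paths_snoc) simp
  moreover have "(a, b) = (1, 0) \<or> (a, b) = (0, 1)"
    using assms by auto
  ultimately show ?thesis
    by (auto simp: paths_0_0 side_weight_single side_gf_value_def)
qed

lemma side_gf_value_rec:
  assumes ab: "a + b \<ge> 2"
  shows "side_gf_value q a b l =
           (if a \<ge> 1 \<and> (b \<le> a - 1) = l then side_gf_value q (a - 1) b l + q * side_gf_value q (a - 1) b (\<not> l) else 0)
         + (if b \<ge> 1 \<and> (b \<le> a) = l then side_gf_value q a (b - 1) l + q * side_gf_value q a (b - 1) (\<not> l) else 0)"
proof -
  consider "b + 1 < a" | "a = b + 1" | "a = b" | "b = a + 1" | "a + 1 < b"
    by linarith
  then show ?thesis
  proof cases
    case 1
    then show ?thesis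
      using ballot_poly_pascal[of b a "1 + q"] unfolding side_gf_value_def by (cases "b = 0") auto
  next
    case 2
    then show ?thesis
      using ab ballot_poly_pascal[of b a "1 + q"] ballot_poly_diag[of b "1 + q"]
      unfolding side_gf_value_def by (auto simp: algebra_simps)
  next
    case 3
    then show ?thesis
      using ab unfolding side_gf_value_def by auto
  next
    case 4
    then show ?thesis
      using ab ballot_poly_pascal[of a b "1 + q"] ballot_poly_diag[of a "1 + q"]
      unfolding side_gf_value_def by (auto simp: algebra_simps)
  next
    case 5
    then show ?thesis
      using ballot_poly_pascal[of a b "1 + q"] unfolding side_gf_value_def by (cases "a = 0") auto
  qed
qed

lemma side_gf_eq_value: "1 \<le> a + b \<Longrightarrow> side_gf q a b l = side_gf_value q a b l"
proof (induction "a + b" arbitrary: a b l rule: less_induct)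
  case less
  show ?case
  proof (cases "a + b = 1")
    case True
    then show ?thesis
      by (rule side_gf_base)
  next
    case False
    then have "a + b \<ge> 2"
      using less.prems by simp
    then show ?thesis
      using less.hyps by (simp add: side_gf_rec side_gf_value_rec)
  qed
qed

lemma height_down_sides_Nil: "down_sides w = [] \<Longrightarrow> height w = int (length w)"
  by (induction w rule: rev_induct) (auto split: if_splits)

lemma last_sides: "w \<noteq> [] \<Longrightarrow> height w \<noteq> 0 \<Longrightarrow> last (sides w) \<longleftrightarrow> height w \<ge> 1"
  by (induction w rule: rev_induct) (auto simp: step_above_def)

text \<open>The up steps between two consecutive down steps climb monotonically, so they switch side at
  most once, and they do so exactly when the two down steps lie on different sides.\<close>

lemma changes_sides_down_sides:
  assumes "w \<noteq> []"
  shows "changes (sides w) = changes (down_sides w)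
           + (if down_sides w \<noteq> [] \<and> last (sides w) \<noteq> last (down_sides w) then 1 else 0)
         \<and> (down_sides w \<noteq> [] \<and> last (sides w) \<noteq> last (down_sides w) \<longrightarrow> height w \<ge> 1)"
  using assms
proof (induction w rule: rev_induct)
  case (snoc c v)
  show ?case
  proof (cases "v = []")
    case True
    then show ?thesis
      using sides_snoc[of "[]" c] down_sides_snoc[of "[]" c] by (simp add: step_above_def)
  next
    case False
    note IH = snoc.IH[OF False]
    have last_v: "height v \<noteq> 0 \<Longrightarrow> last (sides v) \<longleftrightarrow> height v \<ge> 1"
      using last_sides[OF False] .
    show ?thesis
    proof (cases "down_sides v = []")
      case True
      have "height v \<ge> 1"
        using height_down_sides_Nil[OF True] \<open>v \<noteq> []\<close> by (cases v) auto
      moreover have "changes (sides v) = 0"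
        using IH True by simp
      ultimately show ?thesis
        using True last_v \<open>v \<noteq> []\<close> by (cases c) (simp_all add: changes_snoc step_above_def)
    next
      case False
      have same: "last (sides v) = last (down_sides v)" if "height v \<le> 0"
        using IH False that by auto
      consider "height v \<ge> 1" "last (sides v)" | "height v = 0" | "height v \<le> -1" "\<not> last (sides v)"
        using last_v by linarith
      then show ?thesis
      proof cases
        case 1
        then show ?thesis
          using IH False \<open>v \<noteq> []\<close> by (cases c) (simp_all add: changes_snoc step_above_def)
      next
        case 2
        then show ?thesis
          using IH False same \<open>v \<noteq> []\<close> by (cases c) (simp_all add: changes_snoc step_above_def)
      next
        case 3
        then show ?thesis
          using IH False same \<open>v \<noteq> []\<close> by (cases c) (simp_all add: changes_snoc step_above_def)
      qed
    qed
  qed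
qed simp

definition side_stat :: "bool list \<Rightarrow> nat" where
  "side_stat xs = changes xs + (if last xs then 0 else 1)"

lemma side_stat_down_sides:
  assumes "w \<in> paths n n" "n \<ge> 1"
  shows "q ^ side_stat (down_sides w) = side_weight q True w + q * side_weight q False w"
proof -
  have "w \<noteq> []" "height w = 0"
    using assms paths_not_Nil height_path by auto
  moreover have "down_sides w \<noteq> []"
    using height_down_sides_Nil \<open>height w = 0\<close> \<open>w \<noteq> []\<close> by fastforce
  ultimately have "changes (sides w) = changes (down_sides w)" "last (sides w) = last (down_sides w)"
    using changes_sides_down_sides[of w] by auto
  then show ?thesis
    using \<open>w \<noteq> []\<close> by (simp add: side_stat_def side_weight_def)
qed

lemma sum_paths_side_stat:
  assumes "n \<ge> 1"
  shows "(\<Sum>w\<in>paths n n. q ^ side_stat (down_sides w)) = (\<Sum>i=1..n. ballot (n - 1) (n - i) * (1 + q) ^ i)"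
proof -
  have "(\<Sum>w\<in>paths n n. q ^ side_stat (down_sides w)) = side_gf q n n True + q * side_gf q n n False"
    unfolding side_gf_def using assms
    by (simp add: side_stat_down_sides sum.distrib sum_distrib_left cong: sum.cong)
  also have "\<dots> = (1 + q) * ballot_poly (1 + q) n (n - 1)"
    using assms by (simp add: side_gf_eq_value side_gf_value_def algebra_simps)
  also have "\<dots> = (\<Sum>i=0..n. ballot (n - 1) (n - i) * (1 + q) ^ i)"
    using ballot_poly_diag[OF assms] by (simp add: ballot_poly_def)
  also have "\<dots> = (\<Sum>i=1..n. ballot (n - 1) (n - i) * (1 + q) ^ i)"
    unfolding sum.atLeast_Suc_atMost[OF le0] using ballot_pred_self[OF assms] by simp
  finally show ?thesis .
qed

section \<open>Inversion pairs of two-row fillings\<close>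

lemma row_standard_inj: "row_standard n \<tau> \<Longrightarrow> inj_on \<tau> (boxes n)"
  by (simp add: row_standard_def bij_betw_def)

lemma row_standard_column_neq:
  "row_standard n \<tau> \<Longrightarrow> i \<noteq> i' \<Longrightarrow> (i, j) \<in> boxes n \<Longrightarrow> (i', j) \<in> boxes n \<Longrightarrow> \<tau> (i, j) \<noteq> \<tau> (i', j)"
  using inj_onD[OF row_standard_inj] by blast

text \<open>Since fillings are injective, the comparison defining an inversion pair stops at \<open>r = 1\<close>.\<close>

lemma inv_pair_in_column:
  assumes rs: "row_standard n \<tau>" and i: "i \<in> {1, 2}" "i' \<in> {1, 2}" "i \<noteq> i'" and j: "j \<in> {1..n}"
  shows "is_inv_pair n \<tau> (i, j) (i', j) \<longleftrightarrow>
           \<tau> (i, j) < \<tau> (i', j) \<and> (if j < n then \<tau> (i', j + 1) < \<tau> (i, j + 1) else i' < i)"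
proof -
  have "stop_cond n \<tau> (i, j) (i', j) 1"
    using row_standard_column_neq[OF rs \<open>i \<noteq> i'\<close>, of "j + 1"] i j
    by (auto simp: stop_cond_def exists_box_def shift_def boxes_def)
  then have "(LEAST r. r \<ge> 1 \<and> stop_cond n \<tau> (i, j) (i', j) r) = 1"
    by (intro Least_equality) auto
  then show ?thesis
    using i j unfolding is_inv_pair_def Let_def
    by (auto simp: exists_box_def shift_def boxes_def below_def)
qed

definition top_lt_bot :: "(nat \<times> nat \<Rightarrow> nat) \<Rightarrow> nat \<Rightarrow> bool" where
  "top_lt_bot \<tau> j \<longleftrightarrow> \<tau> (1, j) < \<tau> (2, j)"

definition column_pair :: "(nat \<times> nat \<Rightarrow> nat) \<Rightarrow> nat \<Rightarrow> (nat \<times> nat) \<times> (nat \<times> nat)" where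
  "column_pair \<tau> j = (if top_lt_bot \<tau> j then ((1, j), (2, j)) else ((2, j), (1, j)))"

definition inverted_column :: "nat \<Rightarrow> (nat \<times> nat \<Rightarrow> nat) \<Rightarrow> nat \<Rightarrow> bool" where
  "inverted_column n \<tau> j \<longleftrightarrow> (if j < n then top_lt_bot \<tau> j \<noteq> top_lt_bot \<tau> (j + 1) else \<not> top_lt_bot \<tau> j)"

lemma inv_pairs_eq_column_pairs:
  assumes rs: "row_standard n \<tau>"
  shows "{(c, c'). is_inv_pair n \<tau> c c'} = column_pair \<tau> ` {j \<in> {1..n}. inverted_column n \<tau> j}"
proof -
  have neq: "\<tau> (1, j) \<noteq> \<tau> (2, j)" if "j \<in> {1..n}" for j
    using row_standard_column_neq[OF rs, of 1 2 j] that by (simp add: boxes_def)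
  have "is_inv_pair n \<tau> c c' \<longleftrightarrow> (\<exists>j\<in>{1..n}. inverted_column n \<tau> j \<and> (c, c') = column_pair \<tau> j)" for c c'
  proof
    assume inv: "is_inv_pair n \<tau> c c'"
    then obtain i i' j where c: "c = (i, j)" "c' = (i', j)" "i \<in> {1, 2}" "i' \<in> {1, 2}" "i \<noteq> i'" "j \<in> {1..n}"
      unfolding is_inv_pair_def boxes_def by auto
    then have "inverted_column n \<tau> j \<and> (c, c') = column_pair \<tau> j"
      using inv inv_pair_in_column[OF rs c(3-6)]
      by (auto simp: inverted_column_def column_pair_def top_lt_bot_def split: if_splits)
    then show "\<exists>j\<in>{1..n}. inverted_column n \<tau> j \<and> (c, c') = column_pair \<tau> j"
      using c(6) by blast
  next
    assume "\<exists>j\<in>{1..n}. inverted_column n \<tau> j \<and> (c, c') = column_pair \<tau> j"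
    then obtain j where j: "j \<in> {1..n}" "inverted_column n \<tau> j" "(c, c') = column_pair \<tau> j"
      by blast
    have "j < n \<Longrightarrow> \<tau> (1, j + 1) \<noteq> \<tau> (2, j + 1)"
      using neq j(1) by simp
    then show "is_inv_pair n \<tau> c c'"
      using j inv_pair_in_column[OF rs, of 1 2 j] inv_pair_in_column[OF rs, of 2 1 j] neq[of j]
      by (auto simp: inverted_column_def column_pair_def top_lt_bot_def split: if_splits)
  qed
  then show ?thesis
    by auto
qed

lemma changes_map_upt: "changes (map f [1..<Suc m]) = card {j \<in> {1..<m}. f j \<noteq> f (j + 1)}"
proof (induction m)
  case (Suc m)
  show ?case
  proof (cases "m = 0")
    case False
    have "changes (map f [1..<Suc (Suc m)]) = changes (map f [1..<Suc m] @ [f (Suc m)])"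
      by simp
    also have "\<dots> = card {j \<in> {1..<m}. f j \<noteq> f (j + 1)} + (if f m \<noteq> f (m + 1) then 1 else 0)"
      unfolding changes_snoc Suc.IH using False by (simp add: last_map)
    also have "\<dots> = card {j \<in> {1..<Suc m}. f j \<noteq> f (j + 1)}"
    proof -
      have "{j \<in> {1..<Suc m}. f j \<noteq> f (j + 1)} =
              {j \<in> {1..<m}. f j \<noteq> f (j + 1)} \<union> (if f m \<noteq> f (m + 1) then {m} else {})"
        using False by (auto simp: less_Suc_eq)
      then show ?thesis
        by (simp add: card_Un_disjoint)
    qed
    finally show ?thesis .
  qed simp
qed simp

lemma inv_count_eq_side_stat:
  assumes rs: "row_standard n \<tau>" and n: "n \<ge> 1"
  shows "inv_count n \<tau> = side_stat (map (top_lt_bot \<tau>) [1..<Suc n])"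
proof -
  have "inj_on (column_pair \<tau>) X" for X
    by (auto simp: inj_on_def column_pair_def split: if_splits)
  then have "inv_count n \<tau> = card {j \<in> {1..n}. inverted_column n \<tau> j}"
    unfolding inv_count_def inv_pairs_eq_column_pairs[OF rs] by (simp add: card_image)
  also have "{j \<in> {1..n}. inverted_column n \<tau> j} =
               {j \<in> {1..<n}. top_lt_bot \<tau> j \<noteq> top_lt_bot \<tau> (j + 1)} \<union> (if top_lt_bot \<tau> n then {} else {n})"
    using n by (auto simp: inverted_column_def)
  also have "card \<dots> = changes (map (top_lt_bot \<tau>) [1..<Suc n]) + (if top_lt_bot \<tau> n then 0 else 1)"
    unfolding changes_map_upt by (simp add: card_Un_disjoint)
  also have "\<dots> = side_stat (map (top_lt_bot \<tau>) [1..<Suc n])"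
    using n by (simp add: side_stat_def last_map del: upt_Suc)
  finally show ?thesis .
qed

section \<open>Fillings as lattice paths\<close>

lemma sorted_list_of_set_image_strict_mono:
  assumes "strict_mono_on {1..n} f"
  shows "sorted_list_of_set (f ` {1..n}) = map f [1..<Suc n]"
proof -
  have "sorted_wrt (<) (map f [1..<Suc n])"
    unfolding sorted_wrt_map
    by (rule sorted_wrt_mono_rel[OF _ sorted_wrt_upt]) (use assms in \<open>auto simp: strict_mono_on_def\<close>)
  moreover have "f ` {1..n} = set (map f [1..<Suc n])"
    by auto
  ultimately show ?thesis
    by (metis sorted_list_of_set_sort_remdups strict_sorted_iff distinct_remdups_id sorted_sort_id)
qed

lemma strict_mono_on_nth_sorted_list_of_set:
  assumes "finite A" "card A = n"
  shows "strict_mono_on {1..n} (\<lambda>j. sorted_list_of_set A ! (j - 1))"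
    and "(\<lambda>j. sorted_list_of_set A ! (j - 1)) ` {1..n} = A"
proof -
  show "strict_mono_on {1..n} (\<lambda>j. sorted_list_of_set A ! (j - 1))"
    using assms by (auto simp: strict_mono_on_def intro!: sorted_wrt_nth_less[OF strict_sorted_list_of_set])
  have "(\<lambda>j. sorted_list_of_set A ! (j - 1)) ` {1..n} = (\<lambda>j. sorted_list_of_set A ! (j - 1)) ` Suc ` {..<n}"
    by (simp only: image_Suc_lessThan)
  also have "\<dots> = (!) (sorted_list_of_set A) ` {0..<n}"
    by (simp add: image_image atLeast0LessThan)
  also have "\<dots> = A"
    using assms by (simp add: nth_image)
  finally show "(\<lambda>j. sorted_list_of_set A ! (j - 1)) ` {1..n} = A" .
qed

definition row_values :: "nat \<Rightarrow> (nat \<times> nat \<Rightarrow> nat) \<Rightarrow> nat \<Rightarrow> nat set" where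
  "row_values n \<tau> i = (\<lambda>j. \<tau> (i, j)) ` {1..n}"

lemma boxes_eq_rows: "boxes n = Pair 1 ` {1..n} \<union> Pair 2 ` {1..n}"
  by (auto simp: boxes_def)

lemma inj_on_boxes_iff:
  assumes rows: "\<forall>i\<in>{1, 2}. inj_on (\<lambda>j. \<tau> (i, j)) {1..n}"
  shows "inj_on \<tau> (boxes n) \<longleftrightarrow> row_values n \<tau> 1 \<inter> row_values n \<tau> 2 = {}"
proof
  assume inj: "inj_on \<tau> (boxes n)"
  have False if "j \<in> {1..n}" "j' \<in> {1..n}" "\<tau> (1, j) = \<tau> (2, j')" for j j'
    using inj_onD[OF inj that(3)] that(1,2) by (simp add: boxes_def)
  then show "row_values n \<tau> 1 \<inter> row_values n \<tau> 2 = {}"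
    unfolding row_values_def by blast
next
  assume disjoint: "row_values n \<tau> 1 \<inter> row_values n \<tau> 2 = {}"
  show "inj_on \<tau> (boxes n)"
  proof (rule inj_onI)
    fix x y assume "x \<in> boxes n" "y \<in> boxes n" and eq: "\<tau> x = \<tau> y"
    then obtain i j i' j' where x: "x = (i, j)" "i \<in> {1, 2}" "j \<in> {1..n}"
      and y: "y = (i', j')" "i' \<in> {1, 2}" "j' \<in> {1..n}"
      by (auto simp: boxes_def)
    show "x = y"
    proof (cases "i = i'")
      case True
      then have "j = j'"
        using rows x y eq by (auto dest: inj_onD)
      then show ?thesis
        using True x y by simp
    next
      case False
      then have "\<tau> x \<in> row_values n \<tau> 1 \<inter> row_values n \<tau> 2"
        using x y eq unfolding row_values_def by (force simp: image_iff)
      then show ?thesis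
        using disjoint by blast
    qed
  qed
qed

lemma row_standard_iff:
  "row_standard n \<tau> \<longleftrightarrow>
     (\<forall>x. x \<notin> boxes n \<longrightarrow> \<tau> x = 0) \<and>
     (\<forall>i\<in>{1, 2}. strict_mono_on {1..n} (\<lambda>j. \<tau> (i, j))) \<and>
     row_values n \<tau> 1 \<inter> row_values n \<tau> 2 = {} \<and>
     row_values n \<tau> 1 \<union> row_values n \<tau> 2 = {1..2 * n}"
proof -
  have image: "\<tau> ` boxes n = row_values n \<tau> 1 \<union> row_values n \<tau> 2"
    by (auto simp: boxes_eq_rows row_values_def image_image)
  have mono: "(\<forall>i j j'. (i, j) \<in> boxes n \<longrightarrow> (i, j') \<in> boxes n \<longrightarrow> j < j' \<longrightarrow> \<tau> (i, j) < \<tau> (i, j'))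
      \<longleftrightarrow> (\<forall>i\<in>{1, 2}. strict_mono_on {1..n} (\<lambda>j. \<tau> (i, j)))"
    by (auto simp: boxes_def strict_mono_on_def)
  have "(\<forall>i\<in>{1, 2}. strict_mono_on {1..n} (\<lambda>j. \<tau> (i, j))) \<Longrightarrow>
          inj_on \<tau> (boxes n) \<longleftrightarrow> row_values n \<tau> 1 \<inter> row_values n \<tau> 2 = {}"
    by (rule inj_on_boxes_iff) (blast intro: strict_mono_on_imp_inj_on)
  then show ?thesis
    unfolding row_standard_def bij_betw_def image mono by blast
qed

lemma row_standard_rows:
  assumes "row_standard n \<tau>" "i \<in> {1, 2}"
  shows "strict_mono_on {1..n} (\<lambda>j. \<tau> (i, j))" and "card (row_values n \<tau> i) = n"
proof -
  show mono: "strict_mono_on {1..n} (\<lambda>j. \<tau> (i, j))"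
    using assms unfolding row_standard_iff by blast
  show "card (row_values n \<tau> i) = n"
    unfolding row_values_def using card_image[OF strict_mono_on_imp_inj_on[OF mono]] by simp
qed

lemma nth_map_upt_Suc:
  assumes "t \<in> {1..m}"
  shows "map f [1..<Suc m] ! (t - 1) = f t"
proof -
  have "t - 1 < Suc m - 1"
    using assms by auto
  then show ?thesis
    using assms by (simp only: nth_map_upt) simp
qed

lemma row_standard_entry:
  assumes "row_standard n \<tau>" "i \<in> {1, 2}" "j \<in> {1..n}"
  shows "\<tau> (i, j) = sorted_list_of_set (row_values n \<tau> i) ! (j - 1)"
proof -
  have "sorted_list_of_set (row_values n \<tau> i) = map (\<lambda>j. \<tau> (i, j)) [1..<Suc n]"
    unfolding row_values_def by (rule sorted_list_of_set_image_strict_mono[OF row_standard_rows(1)[OF assms(1,2)]])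
  then show ?thesis
    using nth_map_upt_Suc[OF assms(3), of "\<lambda>j. \<tau> (i, j)"] by (simp del: upt_Suc)
qed

lemma count_list_map_upt: "count_list (map P [1..<Suc m]) c = card {t \<in> {1..m}. P t = c}"
proof (induction m)
  case (Suc m)
  have "{t \<in> {1..Suc m}. P t = c} = {t \<in> {1..m}. P t = c} \<union> (if P (Suc m) = c then {Suc m} else {})"
    by (auto simp: le_Suc_eq)
  then show ?case
    using Suc.IH by (simp add: card_Un_disjoint)
qed simp

definition step_positions :: "bool list \<Rightarrow> bool \<Rightarrow> nat set" where
  "step_positions w c = {t \<in> {1..length w}. w ! (t - 1) = c}"

lemma card_step_positions: "card (step_positions w c) = count_list w c"
proof -
  have "map (\<lambda>t. w ! (t - 1)) [1..<Suc (length w)] = w"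
    by (rule nth_equalityI) (simp_all add: nth_map_upt del: upt_Suc)
  then show ?thesis
    unfolding step_positions_def using count_list_map_upt[of "\<lambda>t. w ! (t - 1)" "length w" c] by simp
qed

definition filling_to_path :: "nat \<Rightarrow> (nat \<times> nat \<Rightarrow> nat) \<Rightarrow> bool list" where
  "filling_to_path n \<tau> = map (\<lambda>t. t \<in> row_values n \<tau> 1) [1..<Suc (2 * n)]"

definition path_to_filling :: "nat \<Rightarrow> bool list \<Rightarrow> nat \<times> nat \<Rightarrow> nat" where
  "path_to_filling n w x =
     (if x \<in> boxes n then sorted_list_of_set (step_positions w (fst x = 1)) ! (snd x - 1) else 0)"

lemma mem_row_values_iff:
  assumes "row_standard n \<tau>" "i \<in> {1, 2}" "t \<in> {1..2 * n}"
  shows "t \<in> row_values n \<tau> i \<longleftrightarrow> (t \<in> row_values n \<tau> 1) = (i = 1)"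
  using assms unfolding row_standard_iff by auto

lemma count_list_take_filling_to_path:
  assumes "row_standard n \<tau>" "i \<in> {1, 2}" "p \<le> 2 * n"
  shows "count_list (take p (filling_to_path n \<tau>)) (i = 1) = card (row_values n \<tau> i \<inter> {1..p})"
proof -
  have "take p (filling_to_path n \<tau>) = map (\<lambda>t. t \<in> row_values n \<tau> 1) [1..<Suc p]"
    unfolding filling_to_path_def using assms(3) by (simp add: take_map del: upt_Suc)
  moreover have "{t \<in> {1..p}. (t \<in> row_values n \<tau> 1) = (i = 1)} = row_values n \<tau> i \<inter> {1..p}"
    using mem_row_values_iff[OF assms(1,2)] assms(3) row_standard_iff[of n \<tau>] assms(1)
    by fastforce
  ultimately show ?thesis
    by (simp only: count_list_map_upt)
qed

lemma length_filling_to_path [simp]: "length (filling_to_path n \<tau>) = 2 * n"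
  by (simp add: filling_to_path_def)

lemma filling_to_path_in_paths:
  assumes "row_standard n \<tau>"
  shows "filling_to_path n \<tau> \<in> paths n n"
proof -
  have "count_list (filling_to_path n \<tau>) (i = 1) = n" if "i \<in> {1, 2}" for i :: nat
  proof -
    have "row_values n \<tau> i \<subseteq> {1..2 * n}"
      using assms that unfolding row_standard_iff by blast
    then show ?thesis
      using count_list_take_filling_to_path[OF assms that, of "2 * n"] row_standard_rows(2)[OF assms that]
      by (simp add: Int_absorb2)
  qed
  from this[of 1] this[of 2] show ?thesis
    by (simp add: paths_def)
qed

lemma step_positions_filling_to_path:
  assumes "row_standard n \<tau>" "i \<in> {1, 2}"
  shows "step_positions (filling_to_path n \<tau>) (i = 1) = row_values n \<tau> i"
proof -
  have "filling_to_path n \<tau> ! (t - 1) = (t \<in> row_values n \<tau> 1)" if "t \<in> {1..2 * n}" for t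
    using that unfolding filling_to_path_def by (rule nth_map_upt_Suc)
  moreover have "row_values n \<tau> i \<subseteq> {1..2 * n}"
    using assms unfolding row_standard_iff by blast
  ultimately show ?thesis
    using mem_row_values_iff[OF assms] unfolding step_positions_def by auto
qed

lemma path_to_filling_filling_to_path:
  assumes "row_standard n \<tau>"
  shows "path_to_filling n (filling_to_path n \<tau>) = \<tau>"
proof
  fix x :: "nat \<times> nat"
  show "path_to_filling n (filling_to_path n \<tau>) x = \<tau> x"
  proof (cases "x \<in> boxes n")
    case True
    then obtain i j where "x = (i, j)" "i \<in> {1, 2}" "j \<in> {1..n}"
      by (auto simp: boxes_def)
    then show ?thesis
      using True row_standard_entry[OF assms] step_positions_filling_to_path[OF assms]
      by (simp add: path_to_filling_def)
  next
    case False
    then have "\<tau> x = 0"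
      using assms unfolding row_standard_def by blast
    then show ?thesis
      using False by (simp add: path_to_filling_def)
  qed
qed

lemma step_positions_path:
  assumes "w \<in> paths n n"
  shows "finite (step_positions w c)" "card (step_positions w c) = n"
    and "step_positions w True \<inter> step_positions w False = {}"
    and "step_positions w True \<union> step_positions w False = {1..2 * n}"
proof -
  have "length w = 2 * n"
    using assms length_eq_count_list_bool[of w] by (simp add: paths_def)
  then show "step_positions w True \<inter> step_positions w False = {}"
    and "step_positions w True \<union> step_positions w False = {1..2 * n}"
    by (auto simp: step_positions_def)
  show "finite (step_positions w c)"
    by (simp add: step_positions_def)
  show "card (step_positions w c) = n"
    using assms by (cases c) (simp_all add: card_step_positions paths_def)
qed

lemma path_to_filling_rows:
  assumes "w \<in> paths n n" "i \<in> {1, 2}"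
  shows "strict_mono_on {1..n} (\<lambda>j. path_to_filling n w (i, j))"
    and "row_values n (path_to_filling n w) i = step_positions w (i = 1)"
proof -
  let ?s = "\<lambda>j. sorted_list_of_set (step_positions w (i = 1)) ! (j - 1)"
  have row: "path_to_filling n w (i, j) = ?s j" if "j \<in> {1..n}" for j
    using assms(2) that by (simp add: path_to_filling_def boxes_def)
  note sorted = strict_mono_on_nth_sorted_list_of_set[OF step_positions_path(1,2)[OF assms(1)]]
  show "strict_mono_on {1..n} (\<lambda>j. path_to_filling n w (i, j))"
    using sorted(1) by (simp add: strict_mono_on_def row)
  show "row_values n (path_to_filling n w) i = step_positions w (i = 1)"
    unfolding row_values_def using sorted(2) row by simp
qed

lemma path_to_filling_row_standard:
  assumes "w \<in> paths n n"
  shows "row_standard n (path_to_filling n w)"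
  using path_to_filling_rows[OF assms] step_positions_path[OF assms]
  unfolding row_standard_iff by (simp add: path_to_filling_def)

lemma filling_to_path_path_to_filling:
  assumes "w \<in> paths n n"
  shows "filling_to_path n (path_to_filling n w) = w"
proof (rule nth_equalityI)
  have "length w = 2 * n"
    using assms length_eq_count_list_bool[of w] by (simp add: paths_def)
  then show "length (filling_to_path n (path_to_filling n w)) = length w"
    by simp
  fix p assume "p < length (filling_to_path n (path_to_filling n w))"
  then have p: "Suc p \<in> {1..2 * n}"
    by simp
  have "filling_to_path n (path_to_filling n w) ! p = (Suc p \<in> step_positions w True)"
    using nth_map_upt_Suc[OF p] path_to_filling_rows(2)[OF assms, of 1]
    by (simp add: filling_to_path_def del: upt_Suc)
  also have "\<dots> = w ! p"
    using p \<open>length w = 2 * n\<close> by (auto simp: step_positions_def)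
  finally show "filling_to_path n (path_to_filling n w) ! p = w ! p" .
qed

lemma bij_betw_filling_to_path: "bij_betw (filling_to_path n) {\<tau>. row_standard n \<tau>} (paths n n)"
  by (rule bij_betw_byWitness[where f' = "path_to_filling n"])
     (auto simp: path_to_filling_filling_to_path filling_to_path_path_to_filling
                 filling_to_path_in_paths path_to_filling_row_standard)

lemma card_strict_mono_on_less:
  fixes f :: "nat \<Rightarrow> 'a::linorder"
  assumes "strict_mono_on {1..n} f" "j \<in> {1..n}"
  shows "card {i \<in> {1..n}. f i < f j} = j - 1"
proof -
  have "{i \<in> {1..n}. f i < f j} = {1..<j}"
    using strict_mono_on_less[OF assms(1) _ assms(2)] assms(2) by auto
  then show ?thesis
    by simp
qed

lemma le_card_strict_mono_on_iff:
  fixes f :: "nat \<Rightarrow> 'a::linorder"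
  assumes mono: "strict_mono_on {1..n} f" and j: "j \<in> {1..n}"
  shows "j \<le> card {i \<in> {1..n}. f i < v} \<longleftrightarrow> f j < v"
proof
  assume "f j < v"
  then have "{1..j} \<subseteq> {i \<in> {1..n}. f i < v}"
    using strict_mono_on_less_eq[OF mono _ j] j by fastforce
  then show "j \<le> card {i \<in> {1..n}. f i < v}"
    using card_mono[of "{i \<in> {1..n}. f i < v}" "{1..j}"] by simp
next
  assume card: "j \<le> card {i \<in> {1..n}. f i < v}"
  show "f j < v"
  proof (rule ccontr)
    assume "\<not> f j < v"
    then have "{i \<in> {1..n}. f i < v} \<subseteq> {1..<j}"
      using strict_mono_on_less[OF mono _ j] by fastforce
    then have "card {i \<in> {1..n}. f i < v} \<le> j - 1"
      using card_mono[of "{1..<j}"] by fastforce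
    then show False
      using card j by auto
  qed
qed

lemma card_row_values_below:
  assumes rs: "row_standard n \<tau>" and i: "i \<in> {1, 2}" and v: "v \<ge> 1"
  shows "card (row_values n \<tau> i \<inter> {1..v - 1}) = card {j \<in> {1..n}. \<tau> (i, j) < v}"
proof -
  have "row_values n \<tau> i \<subseteq> {1..2 * n}"
    using rs i unfolding row_standard_iff by blast
  then have "row_values n \<tau> i \<inter> {1..v - 1} = (\<lambda>j. \<tau> (i, j)) ` {j \<in> {1..n}. \<tau> (i, j) < v}"
    using v unfolding row_values_def by force
  moreover have "inj_on (\<lambda>j. \<tau> (i, j)) {j \<in> {1..n}. \<tau> (i, j) < v}"
    using strict_mono_on_imp_inj_on[OF row_standard_rows(1)[OF rs i]] by (rule inj_on_subset) auto
  ultimately show ?thesis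
    by (simp add: card_image)
qed

text \<open>Just before the bottom entry of column \<open>j\<close> the path has taken \<open>j - 1\<close> down steps, so it is at
  height at least \<open>1\<close> iff at least \<open>j\<close> top entries are smaller, i.e.\ iff \<open>\<tau>(1,j) < \<tau>(2,j)\<close>.\<close>

lemma down_side_filling_to_path:
  assumes rs: "row_standard n \<tau>" and j: "j \<in> {1..n}"
  shows "step_above False (height (take (\<tau> (2, j) - 1) (filling_to_path n \<tau>))) = top_lt_bot \<tau> j"
proof -
  let ?prefix = "take (\<tau> (2, j) - 1) (filling_to_path n \<tau>)"
  have "\<tau> (2, j) \<in> {1..2 * n}"
    using rs j unfolding row_standard_iff row_values_def by blast
  then have p: "\<tau> (2, j) - 1 \<le> 2 * n" "\<tau> (2, j) \<ge> 1"
    by auto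
  have "count_list ?prefix (i = 1) = card {j' \<in> {1..n}. \<tau> (i, j') < \<tau> (2, j)}" if "i \<in> {1, 2}" for i :: nat
    using count_list_take_filling_to_path[OF rs that p(1)] card_row_values_below[OF rs that p(2)] by simp
  from this[of 1] this[of 2]
  have "height ?prefix = int (card {i \<in> {1..n}. \<tau> (1, i) < \<tau> (2, j)}) - int (j - 1)"
    using card_strict_mono_on_less[OF row_standard_rows(1)[OF rs, of 2] j] by (simp add: height_def)
  then have "1 \<le> height ?prefix \<longleftrightarrow> j \<le> card {i \<in> {1..n}. \<tau> (1, i) < \<tau> (2, j)}"
    using j by auto
  then show ?thesis
    using le_card_strict_mono_on_iff[OF row_standard_rows(1)[OF rs, of 1] j]
    by (simp add: step_above_def top_lt_bot_def)
qed

lemma set_filter_not_nth: "set (filter (\<lambda>p. \<not> w ! p) [0..<length w]) = (\<lambda>t. t - 1) ` step_positions w False"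
proof (intro equalityI subsetI)
  fix p assume "p \<in> set (filter (\<lambda>p. \<not> w ! p) [0..<length w])"
  then show "p \<in> (\<lambda>t. t - 1) ` step_positions w False"
    by (intro image_eqI[of _ _ "Suc p"]) (auto simp: step_positions_def)
qed (auto simp: step_positions_def)

lemma down_positions_filling_to_path:
  assumes rs: "row_standard n \<tau>"
  shows "filter (\<lambda>p. \<not> filling_to_path n \<tau> ! p) [0..<2 * n] = map (\<lambda>j. \<tau> (2, j) - 1) [1..<Suc n]"
proof (rule sorted_distinct_set_unique)
  let ?w = "filling_to_path n \<tau>"
  have bottom_row: "row_values n \<tau> 2 \<subseteq> {1..2 * n}"
    using rs unfolding row_standard_iff by blast
  have "sorted_wrt (<) (map (\<lambda>j. \<tau> (2, j) - 1) [1..<Suc n])"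
    unfolding sorted_wrt_map
  proof (rule sorted_wrt_mono_rel[OF _ sorted_wrt_upt])
    fix j j' assume "j \<in> set [1..<Suc n]" "j' \<in> set [1..<Suc n]" "j < j'"
    then have "\<tau> (2, j) < \<tau> (2, j')"
      using strict_mono_on_less[OF row_standard_rows(1)[OF rs, of 2], of j j'] by (simp del: upt_Suc)
    moreover have "\<tau> (2, j) \<in> row_values n \<tau> 2"
      using \<open>j \<in> set [1..<Suc n]\<close> by (auto simp: row_values_def)
    ultimately show "\<tau> (2, j) - 1 < \<tau> (2, j') - 1"
      using bottom_row by force
  qed
  then show "sorted (map (\<lambda>j. \<tau> (2, j) - 1) [1..<Suc n])" "distinct (map (\<lambda>j. \<tau> (2, j) - 1) [1..<Suc n])"
    by (simp_all add: strict_sorted_iff)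
  show "sorted (filter (\<lambda>p. \<not> ?w ! p) [0..<2 * n])" "distinct (filter (\<lambda>p. \<not> ?w ! p) [0..<2 * n])"
    by (simp_all add: sorted_wrt_filter)
  have "set (filter (\<lambda>p. \<not> ?w ! p) [0..<2 * n]) = (\<lambda>t. t - 1) ` step_positions ?w False"
    using set_filter_not_nth[of ?w] by simp
  also have "\<dots> = set (map (\<lambda>j. \<tau> (2, j) - 1) [1..<Suc n])"
    using step_positions_filling_to_path[OF rs, of 2]
    by (simp add: row_values_def image_image atLeastLessThanSuc_atLeastAtMost del: upt_Suc)
  finally show "set (filter (\<lambda>p. \<not> ?w ! p) [0..<2 * n]) = set (map (\<lambda>j. \<tau> (2, j) - 1) [1..<Suc n])" .
qed

lemma down_sides_filling_to_path:
  assumes rs: "row_standard n \<tau>"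
  shows "down_sides (filling_to_path n \<tau>) = map (top_lt_bot \<tau>) [1..<Suc n]"
proof -
  have "down_sides (filling_to_path n \<tau>) =
          map (\<lambda>j. step_above False (height (take (\<tau> (2, j) - 1) (filling_to_path n \<tau>)))) [1..<Suc n]"
    unfolding down_sides_def length_filling_to_path down_positions_filling_to_path[OF rs] by simp
  also have "\<dots> = map (top_lt_bot \<tau>) [1..<Suc n]"
    using down_side_filling_to_path[OF rs] by (intro map_cong) (auto simp del: upt_Suc)
  finally show ?thesis .
qed

lemma sum_card_level_sets:
  assumes "finite A"
  shows "(\<Sum>k\<in>f ` A. real (card {x \<in> A. f x = k}) * q ^ k) = (\<Sum>x\<in>A. q ^ f x)"
proof -
  have "(\<Sum>k\<in>f ` A. real (card {x \<in> A. f x = k}) * q ^ k) = (\<Sum>k\<in>f ` A. \<Sum>x\<in>{x \<in> A. f x = k}. q ^ f x)"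
    by (intro sum.cong refl) simp
  also have "\<dots> = (\<Sum>x\<in>A. q ^ f x)"
    by (rule sum.image_gen[OF assms, symmetric])
  finally show ?thesis .
qed

theorem mainTheorem11:
  fixes n :: nat and q :: real
  assumes "n \<ge> 1"
  shows "(\<Sum>k\<in>{k. S n k \<noteq> {}}. real (card (S n k)) * q ^ k)
           = (\<Sum>i=1..n. ballot (n - 1) (n - i) * (1 + q) ^ i)
         \<and> (\<Sum>i=1..n. ballot (n - 1) (n - i) * (1 + q) ^ i)
           = (\<Sum>i=1..n. (real i / real n) * real ((2*n - i - 1) choose (n - i)) * (1 + q) ^ i)"
proof
  let ?RS = "{\<tau>. row_standard n \<tau>}"
  have bij: "bij_betw (filling_to_path n) ?RS (paths n n)"
    by (rule bij_betw_filling_to_path)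
  have "finite ?RS"
    using bij_betw_finite[OF bij] finite_paths by blast
  moreover have "{k. S n k \<noteq> {}} = inv_count n ` ?RS"
    by (auto simp: S_def)
  moreover have "S n k = {\<tau> \<in> ?RS. inv_count n \<tau> = k}" for k
    by (simp add: S_def)
  ultimately have "(\<Sum>k\<in>{k. S n k \<noteq> {}}. real (card (S n k)) * q ^ k) = (\<Sum>\<tau>\<in>?RS. q ^ inv_count n \<tau>)"
    using sum_card_level_sets[of ?RS "inv_count n" q] by simp
  also have "\<dots> = (\<Sum>\<tau>\<in>?RS. q ^ side_stat (down_sides (filling_to_path n \<tau>)))"
    using assms by (intro sum.cong refl) (simp add: inv_count_eq_side_stat down_sides_filling_to_path)
  also have "\<dots> = (\<Sum>w\<in>paths n n. q ^ side_stat (down_sides w))"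
    using sum.reindex_bij_betw[OF bij] .
  also have "\<dots> = (\<Sum>i=1..n. ballot (n - 1) (n - i) * (1 + q) ^ i)"
    by (rule sum_paths_side_stat[OF assms])
  finally show "(\<Sum>k\<in>{k. S n k \<noteq> {}}. real (card (S n k)) * q ^ k)
           = (\<Sum>i=1..n. ballot (n - 1) (n - i) * (1 + q) ^ i)" .
  show "(\<Sum>i=1..n. ballot (n - 1) (n - i) * (1 + q) ^ i)
           = (\<Sum>i=1..n. (real i / real n) * real ((2*n - i - 1) choose (n - i)) * (1 + q) ^ i)"
    by (intro sum.cong refl) (subst ballot_eq_binomial, auto)
qed

end
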